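(* Let $n>2k\geq 4$ be integers. Suppose that $\mathcal{F},\mathcal{G}\subset\binom{[n]}{k}$ are non-trivial and cross-intersecting, and assume $|\mathcal{F}(\hat{1})|\geq\binom{n-2}{k-2}$ and $|\mathcal{G}(\hat{1})|\geq\binom{n-2}{k-2}$. Then: (i) $\mathcal{F}_0\cup\mathcal{G}_1$ and $\mathcal{F}_1\cup\mathcal{G}_0$ are intersecting; (ii) if $\min\{|\mathcal{F}(\hat{1})|,|\mathcal{G}(\hat{1})|\}>\binom{n-2}{k-2}$, then $\mathcal{F}_0\cup\mathcal{G}_1$ and $\mathcal{F}_1\cup\mathcal{G}_0$ are also non-trivial.
   Context: $[n]=\{1,\ldots,n\}$, $[2,n]=\{2,\ldots,n\}$, and $\binom{X}{k}$ is the family of $k$-subsets of $X$. Families $\mathcal{F},\mathcal{G}$ are cross-intersecting if $F\cap G\neq\emptyset$ for all $F\in\mathcal{F},G\in\mathcal{G}$; a family is intersecting if any two of its members intersect; a family is non-trivial if the intersection of all its members is empty. For a family $\mathcal{H}$, $\mathcal{H}(\hat{1})=\{H\in\mathcal{H}\colon 1\in H\}$ and $\mathcal{H}(\bar{1})=\{H\in\mathcal{H}\colon 1\notin H\}$. The lexicographic order on $k$-sets is defined by $F<_L G$ iff $\min(F\setminus G)<\min(G\setminus F)$. For a ground set $X$ and $1\leq m\leq\binom{|X|}{k}$, $\mathcal{L}(X,k,m)$ denotes the family of the first $m$ sets of $\binom{X}{k}$ in lexicographic order. For $\mathcal{H}\subset\binom{[n]}{k}$, define $\mathcal{H}_1=\mathcal{L}([n],k,|\mathcal{H}(\hat{1})|)$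 and $\mathcal{H}_0=\mathcal{L}([2,n],k,|\mathcal{H}(\bar{1})|)$ (the first $|\mathcal{H}(\bar 1)|$ sets of $\binom{[2,n]}{k}$ in lexicographic order). *)

theory Defs
  imports Main
begin

definition ksets :: "nat set \<Rightarrow> nat \<Rightarrow> nat set set" where
  "ksets X k = {F. F \<subseteq> X \<and> card F = k}"

definition cross_intersecting :: "nat set set \<Rightarrow> nat set set \<Rightarrow> bool" where
  "cross_intersecting F G \<longleftrightarrow> (\<forall>A\<in>F. \<forall>B\<in>G. A \<inter> B \<noteq> {})"

definition intersecting :: "nat set set \<Rightarrow> bool" where
  "intersecting F \<longleftrightarrow> (\<forall>A\<in>F. \<forall>B\<in>F. A \<inter> B \<noteq> {})"

definition nontrivial :: "nat set set \<Rightarrow> bool" where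
  "nontrivial F \<longleftrightarrow> \<Inter> F = {}"

definition with1 :: "nat set set \<Rightarrow> nat set set" where
  "with1 H = {A\<in>H. 1 \<in> A}"

definition without1 :: "nat set set \<Rightarrow> nat set set" where
  "without1 H = {A\<in>H. 1 \<notin> A}"

definition lex_less :: "nat set \<Rightarrow> nat set \<Rightarrow> bool" where
  "lex_less F G \<longleftrightarrow> F \<noteq> G \<and> Min (F - G) < Min (G - F)"

definition Lex :: "nat set \<Rightarrow> nat \<Rightarrow> nat \<Rightarrow> nat set set" where
  "Lex X k m = {G \<in> ksets X k. card {F \<in> ksets X k. lex_less F G} < m}"

definition H1 :: "nat \<Rightarrow> nat \<Rightarrow> nat set set \<Rightarrow> nat set set" where
  "H1 n k H = Lex {1..n} k (card (with1 H))"

definition H0 :: "nat \<Rightarrow> nat \<Rightarrow> nat set set \<Rightarrow> nat set set" where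
  "H0 n k H = Lex {2..n} k (card (without1 H))"

end

theory Submission
  imports Defs
begin

(*
  Hilton's lemma: if A, B are cross-intersecting families of k- and l-subsets of Y with
  k + l <= |Y|, then the first |A| k-sets and the first |B| l-sets of Y in lexicographic order
  are cross-intersecting too. Otherwise some T and S from these initial segments are disjoint,
  so S lies in the l-shadow W of the complements of the first |A| k-sets. These complements form
  a final lex segment, hence by Kruskal-Katona (final lex segments have the smallest shadows,
  proved with Frankl's (U,V)-compressions) W is a final segment no larger than the l-shadow of
  the complements of A, which B avoids. A final and an initial segment sharing S cover all
  l-sets, so |W| + |B| exceeds their number: a contradiction.

  Apply this inside [2,n] to F(not 1) and {G - {1} | G in G(1)}: F_0 cross-intersects the first
  |G(1)| (k-1)-subsets of [2,n], which include all those through 2 as |G(1)| >= C(n-2,k-2); hence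
  every member of F_0 contains 2. Every member of G_1 contains 1, and removing 1 from it gives one
  of those (k-1)-sets; this is (i). If |G(1)| > C(n-2,k-2), then G_1 contains all k-sets through
  {1,2} and also a set R with 1 in R, 2 not in R; a k-set through {1,2} meeting R only in 1 and
  the first member of F_0, which avoids 1, give (ii).
*)

(* Agrees with lex_less on sets of equal size but needs no Min of a possibly empty difference. *)
definition lex_prec :: "nat set \<Rightarrow> nat set \<Rightarrow> bool" where
  "lex_prec A B \<longleftrightarrow> (\<exists>j. j \<in> A \<and> j \<notin> B \<and> (\<forall>i<j. i \<in> A \<longleftrightarrow> i \<in> B))"

lemma lex_prec_irrefl: "\<not> lex_prec A A"
  by (auto simp: lex_prec_def)

lemma lex_prec_trans:
  assumes "lex_prec A B" "lex_prec B C"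
  shows "lex_prec A C"
proof -
  obtain j1 where j1: "j1 \<in> A" "j1 \<notin> B" "\<forall>i<j1. i \<in> A \<longleftrightarrow> i \<in> B"
    using assms(1) by (auto simp: lex_prec_def)
  obtain j2 where j2: "j2 \<in> B" "j2 \<notin> C" "\<forall>i<j2. i \<in> B \<longleftrightarrow> i \<in> C"
    using assms(2) by (auto simp: lex_prec_def)
  have "j1 \<noteq> j2"
    using j1 j2 by auto
  then show ?thesis
    unfolding lex_prec_def using j1 j2
    by (cases "j1 < j2") (auto intro!: exI[of _ "min j1 j2"])
qed

lemma lex_prec_total:
  assumes "A \<noteq> B"
  shows "lex_prec A B \<or> lex_prec B A"
proof -
  define j where "j = (LEAST j. j \<in> A \<longleftrightarrow> j \<notin> B)"
  have "\<exists>j. j \<in> A \<longleftrightarrow> j \<notin> B"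
    using assms by blast
  then have "j \<in> A \<longleftrightarrow> j \<notin> B"
    unfolding j_def by (rule LeastI_ex)
  moreover have "\<forall>i<j. i \<in> A \<longleftrightarrow> i \<in> B"
    unfolding j_def using not_less_Least by blast
  ultimately show ?thesis
    unfolding lex_prec_def by blast
qed

lemma lex_prec_iff_Min:
  assumes "finite A" "finite B" "A - B \<noteq> {}" "B - A \<noteq> {}"
  shows "lex_prec A B \<longleftrightarrow> Min (A - B) < Min (B - A)"
proof
  assume "lex_prec A B"
  then obtain j where j: "j \<in> A" "j \<notin> B" "\<forall>i<j. i \<in> A \<longleftrightarrow> i \<in> B"
    unfolding lex_prec_def by blast
  have "Min (B - A) \<in> B - A"
    using assms by (intro Min_in) auto
  then have "j < Min (B - A)"
    using j by (metis DiffD1 DiffD2 linorder_neqE_nat)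
  moreover have "Min (A - B) \<le> j"
    using j assms by (intro Min_le) auto
  ultimately show "Min (A - B) < Min (B - A)"
    by simp
next
  assume less: "Min (A - B) < Min (B - A)"
  have "\<forall>i<Min (A - B). i \<in> A \<longleftrightarrow> i \<in> B"
    using less assms by (metis DiffI Min_le finite_Diff leD less_trans)
  moreover have "Min (A - B) \<in> A - B"
    using assms by (intro Min_in) auto
  ultimately show "lex_prec A B"
    unfolding lex_prec_def by blast
qed

lemma lex_less_iff_lex_prec:
  assumes "finite A" "finite B" "card A = card B"
  shows "lex_less A B \<longleftrightarrow> lex_prec A B"
proof (cases "A = B")
  case False
  have "A - B \<noteq> {}" "B - A \<noteq> {}"
    using False assms card_subset_eq[of A B] card_subset_eq[of B A] by auto
  then show ?thesis
    using False assms lex_prec_iff_Min by (simp add: lex_less_def)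
qed (simp add: lex_less_def lex_prec_irrefl)

lemma lex_prec_Diff:
  assumes "A \<subseteq> Y" "B \<subseteq> Y" "lex_prec A B"
  shows "lex_prec (Y - B) (Y - A)"
  using assms unfolding lex_prec_def by blast

lemma lex_prec_insert:
  assumes "x \<notin> A" "x \<notin> B"
  shows "lex_prec (insert x A) (insert x B) \<longleftrightarrow> lex_prec A B"
proof -
  have "(\<forall>i<j. i \<in> insert x A \<longleftrightarrow> i \<in> insert x B) \<longleftrightarrow> (\<forall>i<j. i \<in> A \<longleftrightarrow> i \<in> B)" for j
    using assms by blast
  then show ?thesis
    unfolding lex_prec_def using assms by auto
qed

lemma finite_ksets: "finite X \<Longrightarrow> finite (ksets X k)"
  unfolding ksets_def by (rule finite_subset[of _ "Pow X"]) auto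

lemma ksetsD:
  assumes "A \<in> ksets X k" "finite X"
  shows "finite A" "card A = k" "A \<subseteq> X"
  using assms finite_subset unfolding ksets_def by auto

lemma ksets_mono: "X \<subseteq> Y \<Longrightarrow> ksets X k \<subseteq> ksets Y k"
  unfolding ksets_def by blast

lemma Diff_singleton_in_ksets:
  assumes "A \<in> ksets X k" "finite X" "x \<in> A"
  shows "A - {x} \<in> ksets (X - {x}) (k - 1)"
  using assms ksetsD[OF assms(1,2)] unfolding ksets_def by auto

lemma insert_in_ksets:
  assumes "A \<in> ksets X k" "finite X" "x \<in> Y - A" "X \<subseteq> Y"
  shows "insert x A \<in> ksets Y (Suc k)"
  using assms ksetsD[OF assms(1,2)] unfolding ksets_def by auto

lemma Diff_in_ksets:
  assumes "A \<in> ksets X k" "finite X"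
  shows "X - A \<in> ksets X (card X - k)"
  using assms ksetsD[OF assms] unfolding ksets_def by (auto simp: card_Diff_subset)

lemma ex_ksets_superset:
  assumes "finite X" "P \<subseteq> X" "card P \<le> j" "j \<le> card X"
  obtains S where "S \<in> ksets X j" "P \<subseteq> S"
proof -
  have "j - card P \<le> card (X - P)"
    using assms by (simp add: card_Diff_subset finite_subset)
  then obtain Z where Z: "Z \<subseteq> X - P" "card Z = j - card P" "finite Z"
    by (rule obtain_subset_with_card_n)
  have "card (P \<union> Z) = j"
    using Z assms by (subst card_Un_disjoint) (auto intro: finite_subset)
  then show ?thesis
    using that[of "P \<union> Z"] Z assms unfolding ksets_def by blast
qed

lemma card_ksets_superset:
  assumes "finite X" "P \<subseteq> X" "card P \<le> k"
  shows "card {E \<in> ksets X k. P \<subseteq> E} = (card X - card P) choose (k - card P)"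
proof -
  have fP: "finite P"
    using assms finite_subset by blast
  have "bij_betw (\<lambda>E. E \<union> P) (ksets (X - P) (k - card P)) {E \<in> ksets X k. P \<subseteq> E}"
  proof (rule bij_betw_byWitness[where f' = "\<lambda>E. E - P"])
    have "card (E \<union> P) = k" if "E \<subseteq> X - P" "card E = k - card P" for E
      using that assms fP finite_subset[of E X] by (subst card_Un_disjoint) auto
    then show "(\<lambda>E. E \<union> P) ` ksets (X - P) (k - card P) \<subseteq> {E \<in> ksets X k. P \<subseteq> E}"
      using assms by (auto simp: ksets_def)
    show "(\<lambda>E. E - P) ` {E \<in> ksets X k. P \<subseteq> E} \<subseteq> ksets (X - P) (k - card P)"
      using assms fP by (auto simp: ksets_def card_Diff_subset finite_subset)
  qed (auto simp: ksets_def)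
  then have "card {E \<in> ksets X k. P \<subseteq> E} = card (ksets (X - P) (k - card P))"
    by (simp add: bij_betw_same_card)
  also have "\<dots> = (card X - card P) choose (k - card P)"
    using assms fP by (simp add: ksets_def n_subsets card_Diff_subset)
  finally show ?thesis .
qed

definition lex_preds :: "nat set \<Rightarrow> nat \<Rightarrow> nat set \<Rightarrow> nat set set" where
  "lex_preds X k E = {F \<in> ksets X k. lex_prec F E}"

definition lex_initial :: "nat set \<Rightarrow> nat \<Rightarrow> nat set set \<Rightarrow> bool" where
  "lex_initial X k Z \<longleftrightarrow>
     Z \<subseteq> ksets X k \<and> (\<forall>E\<in>Z. \<forall>E'\<in>ksets X k. lex_prec E' E \<longrightarrow> E' \<in> Z)"

definition lex_final :: "nat set \<Rightarrow> nat \<Rightarrow> nat set set \<Rightarrow> bool" where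
  "lex_final X k Z \<longleftrightarrow>
     Z \<subseteq> ksets X k \<and> (\<forall>E\<in>Z. \<forall>E'\<in>ksets X k. lex_prec E E' \<longrightarrow> E' \<in> Z)"

lemma finite_lex_preds: "finite X \<Longrightarrow> finite (lex_preds X k E)"
  unfolding lex_preds_def using finite_ksets by auto

lemma Lex_conv_lex_preds:
  assumes "finite X"
  shows "Lex X k m = {G \<in> ksets X k. card (lex_preds X k G) < m}"
proof -
  have "{F \<in> ksets X k. lex_less F G} = lex_preds X k G" if "G \<in> ksets X k" for G
    using that assms ksetsD lex_less_iff_lex_prec unfolding lex_preds_def by metis
  then show ?thesis
    unfolding Lex_def by auto
qed

lemma Lex_subset_ksets: "finite X \<Longrightarrow> Lex X k m \<subseteq> ksets X k"
  by (simp add: Lex_conv_lex_preds)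

lemma card_lex_preds_less:
  assumes "finite X" "E \<in> ksets X k" "lex_prec E E'"
  shows "card (lex_preds X k E) < card (lex_preds X k E')"
proof (rule psubset_card_mono)
  show "lex_preds X k E \<subset> lex_preds X k E'"
    using assms lex_prec_trans lex_prec_irrefl unfolding lex_preds_def by blast
qed (use assms finite_lex_preds in blast)

lemma inj_on_card_lex_preds:
  assumes "finite X"
  shows "inj_on (\<lambda>E. card (lex_preds X k E)) (ksets X k)"
proof (rule inj_onI, rule ccontr)
  fix E E' assume E: "E \<in> ksets X k" "E' \<in> ksets X k" "E \<noteq> E'"
    and eq: "card (lex_preds X k E) = card (lex_preds X k E')"
  from lex_prec_total[OF E(3)] show False
  proof
    assume "lex_prec E E'"
    then show False
      using card_lex_preds_less[of X E k E'] assms E eq by simp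
  next
    assume "lex_prec E' E"
    then show False
      using card_lex_preds_less[of X E' k E] assms E eq by simp
  qed
qed

lemma card_Lex_le:
  assumes "finite X"
  shows "card (Lex X k m) \<le> m"
proof -
  have "inj_on (\<lambda>E. card (lex_preds X k E)) (Lex X k m)"
    using inj_on_card_lex_preds[OF assms] Lex_subset_ksets[OF assms] by (rule inj_on_subset)
  moreover have "(\<lambda>E. card (lex_preds X k E)) ` Lex X k m \<subseteq> {..<m}"
    using assms by (auto simp: Lex_conv_lex_preds)
  ultimately show ?thesis
    using card_inj_on_le[of _ "Lex X k m" "{..<m}"] by fastforce
qed

lemma lex_initial_Lex:
  assumes "finite X"
  shows "lex_initial X k (Lex X k m)"
  unfolding lex_initial_def Lex_conv_lex_preds[OF assms]
  using card_lex_preds_less[OF assms] by fastforce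

lemma ex_lex_least:
  assumes "finite X" "Z \<subseteq> ksets X k" "Z \<noteq> {}"
  obtains R where "R \<in> Z" "\<And>E. E \<in> Z \<Longrightarrow> \<not> lex_prec E R"
proof -
  obtain R where "R \<in> Z" and least: "\<And>E. E \<in> Z \<Longrightarrow> card (lex_preds X k R) \<le> card (lex_preds X k E)"
    using ex_has_least_nat[of "\<lambda>E. E \<in> Z" _ "\<lambda>E. card (lex_preds X k E)"] assms(3) by blast
  then show ?thesis
    using that assms card_lex_preds_less[OF assms(1)] by (meson leD subsetD)
qed

lemma lex_initial_subset_Lex:
  assumes "finite X" "lex_initial X k Z" "card Z \<le> b"
  shows "Z \<subseteq> Lex X k b"
proof
  fix E assume E: "E \<in> Z"
  have fin: "finite Z"
    using assms finite_ksets finite_subset unfolding lex_initial_def by blast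
  have "lex_preds X k E \<subseteq> Z - {E}"
    using assms(2) E lex_prec_irrefl unfolding lex_initial_def lex_preds_def by blast
  then have "card (lex_preds X k E) < card Z"
    using fin E by (meson card_Diff1_less card_mono finite_Diff le_less_trans)
  then show "E \<in> Lex X k b"
    using assms E unfolding Lex_conv_lex_preds[OF assms(1)] lex_initial_def by auto
qed

lemma Lex_subset_lex_initial:
  assumes "finite X" "lex_initial X k Z" "b \<le> card Z"
  shows "Lex X k b \<subseteq> Z"
proof
  fix T assume T: "T \<in> Lex X k b"
  show "T \<in> Z"
  proof (rule ccontr)
    assume "T \<notin> Z"
    have "E \<in> lex_preds X k T" if E: "E \<in> Z" for E
    proof -
      have "E \<noteq> T" "E \<in> ksets X k" "T \<in> ksets X k"
        using E \<open>T \<notin> Z\<close> T assms(2) Lex_subset_ksets[OF assms(1)] unfolding lex_initial_def by auto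
      then show ?thesis
        using lex_prec_total[of E T] assms(2) E \<open>T \<notin> Z\<close> unfolding lex_initial_def lex_preds_def by blast
    qed
    then have "Z \<subseteq> lex_preds X k T"
      by blast
    then have "card Z \<le> card (lex_preds X k T)"
      using finite_lex_preds[OF assms(1)] by (rule card_mono[rotated])
    then show False
      using T assms(3) by (simp add: Lex_conv_lex_preds[OF assms(1)])
  qed
qed

lemma ex_Lex_notin:
  assumes "finite X" "Z \<subset> ksets X k" "card Z < b"
  obtains R where "R \<in> Lex X k b" "R \<notin> Z"
proof -
  obtain R where R: "R \<in> ksets X k - Z" and least: "\<And>E. E \<in> ksets X k - Z \<Longrightarrow> \<not> lex_prec E R"
    using ex_lex_least[OF assms(1), of "ksets X k - Z"] assms(2) by blast
  have "lex_preds X k R \<subseteq> Z"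
    using least unfolding lex_preds_def by blast
  then have "card (lex_preds X k R) < b"
    using assms finite_ksets finite_subset card_mono by (metis le_less_trans psubset_imp_subset)
  with R show ?thesis
    by (intro that) (auto simp: Lex_conv_lex_preds[OF assms(1)])
qed

lemma Lex_Diff_singleton:
  assumes "finite X" "R \<in> Lex X k b" "x \<in> R"
  shows "R - {x} \<in> Lex (X - {x}) (k - 1) b"
proof -
  have R: "R \<in> ksets X k"
    using assms Lex_subset_ksets by blast
  have "inj_on (insert x) {E. x \<notin> E}"
    by (rule inj_onI) (metis Diff_insert_absorb mem_Collect_eq)
  then have "inj_on (insert x) (lex_preds (X - {x}) (k - 1) (R - {x}))"
    by (rule inj_on_subset) (auto simp: lex_preds_def ksets_def)
  moreover have "insert x ` lex_preds (X - {x}) (k - 1) (R - {x}) \<subseteq> lex_preds X k R"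
  proof (rule image_subsetI)
    fix E assume E: "E \<in> lex_preds (X - {x}) (k - 1) (R - {x})"
    have "x \<notin> E" "lex_prec E (R - {x})" "E \<in> ksets (X - {x}) (k - 1)"
      using E unfolding lex_preds_def ksets_def by auto
    moreover have "k \<ge> 1"
      using R assms(1,3) ksetsD[OF R] by (metis card_0_eq empty_iff le_less_linear less_one)
    ultimately show "insert x E \<in> lex_preds X k R"
      using assms(1,3) R lex_prec_insert[of x E "R - {x}"]
      unfolding lex_preds_def ksets_def by (auto simp: insert_absorb finite_subset)
  qed
  ultimately have "card (lex_preds (X - {x}) (k - 1) (R - {x})) \<le> card (lex_preds X k R)"
    using finite_lex_preds[OF assms(1)] by (rule card_inj_on_le)
  then show ?thesis
    using assms R Diff_singleton_in_ksets[OF R assms(1,3)]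
    by (simp add: Lex_conv_lex_preds)
qed

lemma lex_initial_supersets:
  assumes "\<And>p y. p \<in> P \<Longrightarrow> y \<in> X - P \<Longrightarrow> p < y"
  shows "lex_initial X k {E \<in> ksets X k. P \<subseteq> E}"
  unfolding lex_initial_def
proof (intro conjI ballI impI)
  fix E E' assume "E \<in> {E \<in> ksets X k. P \<subseteq> E}" and E': "E' \<in> ksets X k" "lex_prec E' E"
  then have E: "E \<in> ksets X k" "P \<subseteq> E"
    by auto
  from E'(2) obtain j where j: "j \<in> E'" "j \<notin> E" "\<forall>i<j. i \<in> E' \<longleftrightarrow> i \<in> E"
    unfolding lex_prec_def by blast
  have "j \<in> X - P"
    using j E E' unfolding ksets_def by blast
  then show "E' \<in> {E \<in> ksets X k. P \<subseteq> E}"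
    using assms j E E' by blast
qed simp

lemma lex_final_Diff_image:
  assumes "finite X" "lex_initial X k Z"
  shows "lex_final X (card X - k) ((-) X ` Z)"
  unfolding lex_final_def
proof (intro conjI ballI impI)
  show "(-) X ` Z \<subseteq> ksets X (card X - k)"
    using assms Diff_in_ksets unfolding lex_initial_def by blast
next
  fix R B assume R: "R \<in> (-) X ` Z" and B: "B \<in> ksets X (card X - k)" and prec: "lex_prec R B"
  then obtain T where T: "T \<in> Z" "R = X - T"
    by blast
  have Tk: "T \<in> ksets X k"
    using T assms unfolding lex_initial_def by blast
  have "k \<le> card X"
    using ksetsD[OF Tk assms(1)] card_mono[OF assms(1)] by metis
  have "lex_prec (X - B) T"
    using lex_prec_Diff[of R X B] prec T ksetsD[OF Tk assms(1)] B unfolding ksets_def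
    by (simp add: Diff_Diff_Int inf.absorb2)
  moreover have "X - B \<in> ksets X k"
    using Diff_in_ksets[OF B assms(1)] \<open>k \<le> card X\<close> by simp
  ultimately have "X - B \<in> Z"
    using assms T unfolding lex_initial_def by blast
  moreover have "B = X - (X - B)"
    using B unfolding ksets_def by blast
  ultimately show "B \<in> (-) X ` Z"
    by blast
qed

lemma lex_final_subset:
  assumes "finite X" "lex_final X k Q" "lex_final X k P" "card Q \<le> card P"
  shows "Q \<subseteq> P"
proof
  fix G assume G: "G \<in> Q"
  show "G \<in> P"
  proof (rule ccontr)
    assume "G \<notin> P"
    have "H \<in> Q - {G}" if H: "H \<in> P" for H
    proof -
      have "H \<noteq> G"
        using H \<open>G \<notin> P\<close> by blast
      moreover have "H \<in> ksets X k" "G \<in> ksets X k"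
        using H G assms(2,3) unfolding lex_final_def by blast+
      ultimately show ?thesis
        using lex_prec_total[of H G] assms(2,3) H G \<open>G \<notin> P\<close> unfolding lex_final_def by blast
    qed
    then have "P \<subseteq> Q - {G}"
      by blast
    moreover have fin: "finite Q"
      using assms finite_ksets finite_subset unfolding lex_final_def by blast
    ultimately have "card P < card Q"
      using G by (meson card_Diff1_less card_mono finite_Diff le_less_trans)
    then show False
      using assms(4) by simp
  qed
qed

lemma lex_final_Un_lex_initial:
  assumes "lex_final X k W" "lex_initial X k L" "S \<in> W" "S \<in> L"
  shows "ksets X k \<subseteq> W \<union> L"
proof
  fix E assume E: "E \<in> ksets X k"
  show "E \<in> W \<union> L"
  proof (cases "E = S")
    case False
    then show ?thesis
      using lex_prec_total[OF False] assms E unfolding lex_final_def lex_initial_def by blast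
  qed (use assms in simp)
qed

definition shadow :: "nat set set \<Rightarrow> nat set set" where
  "shadow F = {B. \<exists>A\<in>F. \<exists>x\<in>A. B = A - {x}}"

lemma shadowI: "A \<in> F \<Longrightarrow> x \<in> A \<Longrightarrow> B = A - {x} \<Longrightarrow> B \<in> shadow F"
  unfolding shadow_def by blast

lemma shadow_subset_ksets:
  assumes "finite Y" "F \<subseteq> ksets Y s"
  shows "shadow F \<subseteq> ksets Y (s - 1)"
proof
  fix B assume "B \<in> shadow F"
  then obtain A x where "A \<in> F" "x \<in> A" "B = A - {x}"
    unfolding shadow_def by blast
  then show "B \<in> ksets Y (s - 1)"
    using assms Diff_singleton_in_ksets[of A Y s x] ksets_mono[of "Y - {x}" Y] by blast
qed

lemma finite_shadow: "finite Y \<Longrightarrow> F \<subseteq> ksets Y s \<Longrightarrow> finite (shadow F)"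
  using shadow_subset_ksets finite_ksets finite_subset by metis

definition shiftable :: "nat set \<Rightarrow> nat set \<Rightarrow> nat set \<Rightarrow> bool" where
  "shiftable U V D \<longleftrightarrow> U \<subseteq> D \<and> V \<inter> D = {}"

definition shift :: "nat set \<Rightarrow> nat set \<Rightarrow> nat set \<Rightarrow> nat set" where
  "shift U V D = (D - U) \<union> V"

definition compress :: "nat set \<Rightarrow> nat set \<Rightarrow> nat set set \<Rightarrow> nat set set" where
  "compress U V F =
     {D \<in> F. \<not> shiftable U V D \<or> shift U V D \<in> F} \<union>
     shift U V ` {D \<in> F. shiftable U V D \<and> shift U V D \<notin> F}"

definition compressed :: "nat set \<Rightarrow> nat set \<Rightarrow> nat set set \<Rightarrow> bool" where
  "compressed U V F \<longleftrightarrow> (\<forall>D\<in>F. shiftable U V D \<longrightarrow> shift U V D \<in> F)"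

definition shift_pair :: "nat set \<Rightarrow> nat set \<Rightarrow> nat set \<Rightarrow> bool" where
  "shift_pair Y U V \<longleftrightarrow>
     U \<subseteq> Y \<and> V \<subseteq> Y \<and> U \<inter> V = {} \<and> card U = card V \<and> U \<noteq> {} \<and> Min U < Min V"

lemma compress_eq:
  fixes U V :: "nat set" and F :: "nat set set"
  defines "M \<equiv> {D \<in> F. shiftable U V D \<and> shift U V D \<notin> F}"
  shows "compress U V F = (F - M) \<union> shift U V ` M" "(F - M) \<inter> shift U V ` M = {}"
  unfolding compress_def M_def by auto

lemma inj_on_shift: "U \<inter> V = {} \<Longrightarrow> inj_on (shift U V) {D. shiftable U V D}"
  by (rule inj_onI) (auto simp: shift_def shiftable_def)

lemma card_compress:
  assumes "finite F" "U \<inter> V = {}"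
  shows "card (compress U V F) = card F"
proof -
  define M where "M = {D \<in> F. shiftable U V D \<and> shift U V D \<notin> F}"
  have M: "finite M" "M \<subseteq> F"
    using assms by (auto simp: M_def)
  have "inj_on (shift U V) M"
    using inj_on_shift[OF assms(2)] by (rule inj_on_subset) (auto simp: M_def)
  then have "card (compress U V F) = card (F - M) + card M"
    using compress_eq[where U=U and V=V and F=F] M assms by (simp add: M_def card_Un_disjoint card_image)
  also have "\<dots> = card F"
    using M assms by (simp add: card_Diff_subset card_mono)
  finally show ?thesis .
qed

lemma finite_compress: "finite F \<Longrightarrow> finite (compress U V F)"
  by (simp add: compress_def)

lemma shift_pair_finite:
  assumes "finite Y" "shift_pair Y U V"
  shows "finite U" "finite V"
  using assms finite_subset unfolding shift_pair_def by blast+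

lemma shift_in_ksets:
  assumes "finite Y" "shift_pair Y U V" "D \<in> ksets Y s" "shiftable U V D"
  shows "shift U V D \<in> ksets Y s"
proof -
  have fin: "finite D" "finite U" "finite V"
    using ksetsD(1) shift_pair_finite assms by blast+
  have "card (shift U V D) = card (D - U) + card V"
    unfolding shift_def using fin assms(4) by (intro card_Un_disjoint) (auto simp: shiftable_def)
  also have "\<dots> = s"
    using assms fin ksetsD(2)[OF assms(3,1)] card_mono[of D U]
    by (auto simp: shiftable_def shift_pair_def card_Diff_subset)
  finally show ?thesis
    using assms ksetsD(3)[OF assms(3,1)] by (auto simp: ksets_def shift_def shift_pair_def)
qed

lemma compress_subset_ksets:
  assumes "finite Y" "shift_pair Y U V" "F \<subseteq> ksets Y s"
  shows "compress U V F \<subseteq> ksets Y s"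
  using assms shift_in_ksets unfolding compress_def by blast

lemma lex_prec_shift:
  assumes "finite Y" "shift_pair Y U V" "shiftable U V D"
  shows "lex_prec D (shift U V D)"
proof -
  have fin: "finite U" "finite V"
    using shift_pair_finite[OF assms(1,2)] .
  have "U \<noteq> {}" "Min U < Min V"
    using assms(2) by (simp_all add: shift_pair_def)
  then have "Min U \<in> U"
    using fin by simp
  moreover have "i \<notin> U" "i \<notin> V" if "i < Min U" for i
    using that fin \<open>Min U < Min V\<close> Min_le[of U i] Min_le[of V i] by linarith+
  ultimately show ?thesis
    unfolding lex_prec_def using assms(2,3)
    by (intro exI[of _ "Min U"]) (auto simp: shift_def shiftable_def shift_pair_def)
qed

definition lex_weight :: "nat set \<Rightarrow> nat \<Rightarrow> nat set set \<Rightarrow> nat" where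
  "lex_weight Y s F = (\<Sum>D\<in>F. card {E \<in> ksets Y s. lex_prec D E})"

lemma lex_weight_compress_less:
  assumes "finite Y" "shift_pair Y U V" "F \<subseteq> ksets Y s" "\<not> compressed U V F"
  shows "lex_weight Y s (compress U V F) < lex_weight Y s F"
proof -
  define M where "M = {D \<in> F. shiftable U V D \<and> shift U V D \<notin> F}"
  let ?w = "\<lambda>D. card {E \<in> ksets Y s. lex_prec D E}"
  have "finite F"
    using assms(1,3) finite_ksets finite_subset by blast
  then have fin: "finite F" "finite M" "M \<subseteq> F"
    by (auto simp: M_def)
  have "M \<noteq> {}"
    using assms(4) by (auto simp: compressed_def M_def)
  have UV: "U \<inter> V = {}"
    using assms(2) by (simp add: shift_pair_def)
  have inj: "inj_on (shift U V) M"
    using inj_on_shift[OF UV] by (rule inj_on_subset) (auto simp: M_def)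
  have less: "?w (shift U V D) < ?w D" if "D \<in> M" for D
  proof (rule psubset_card_mono)
    have "lex_prec D (shift U V D)" "shift U V D \<in> ksets Y s"
      using that assms lex_prec_shift shift_in_ksets by (auto simp: M_def)
    then show "{E \<in> ksets Y s. lex_prec (shift U V D) E} \<subset> {E \<in> ksets Y s. lex_prec D E}"
      using lex_prec_trans lex_prec_irrefl by blast
  qed (use finite_ksets assms(1) in auto)
  have "lex_weight Y s (compress U V F) = sum ?w (F - M) + sum (?w \<circ> shift U V) M"
    unfolding lex_weight_def compress_eq(1)[where U=U and V=V and F=F, folded M_def]
    using compress_eq(2)[where U=U and V=V and F=F, folded M_def] fin inj by (simp add: sum.union_disjoint sum.reindex)
  also have "\<dots> < sum ?w (F - M) + sum ?w M"
    using sum_strict_mono[OF fin(2) \<open>M \<noteq> {}\<close> less] by simp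
  also have "\<dots> = lex_weight Y s F"
    unfolding lex_weight_def using fin sum.subset_diff[of M F ?w] by simp
  finally show ?thesis .
qed

lemma mem_compress_shiftable:
  assumes "U \<inter> V = {}" "U \<noteq> {}" "shiftable U V E"
  shows "E \<in> compress U V F \<longleftrightarrow> E \<in> F \<and> shift U V E \<in> F"
  using assms unfolding compress_def shiftable_def shift_def by blast

lemma mem_compress_shifted:
  assumes "U \<inter> V = {}" "V \<noteq> {}" "V \<subseteq> E" "U \<inter> E = {}"
  shows "E \<in> compress U V F \<longleftrightarrow> E \<in> F \<or> (E - V) \<union> U \<in> F"
proof
  assume "E \<in> F \<or> (E - V) \<union> U \<in> F"
  moreover have "shiftable U V ((E - V) \<union> U)" "shift U V ((E - V) \<union> U) = E"
    using assms unfolding shiftable_def shift_def by auto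
  moreover have "\<not> shiftable U V E"
    using assms unfolding shiftable_def by blast
  ultimately show "E \<in> compress U V F"
    unfolding compress_def by (metis (mono_tags, lifting) Un_iff image_eqI mem_Collect_eq)
next
  assume "E \<in> compress U V F"
  then consider "E \<in> F" | D where "D \<in> F" "shiftable U V D" "E = shift U V D"
    unfolding compress_def by blast
  then show "E \<in> F \<or> (E - V) \<union> U \<in> F"
  proof cases
    case 2
    then have "(E - V) \<union> U = D"
      unfolding shiftable_def shift_def by blast
    then show ?thesis
      using 2 by simp
  qed simp
qed

lemma mem_compress_fixed:
  assumes "\<not> shiftable U V E" "\<not> (V \<subseteq> E \<and> U \<inter> E = {})"
  shows "E \<in> compress U V F \<longleftrightarrow> E \<in> F"
  using assms unfolding compress_def shiftable_def shift_def by auto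

lemma shift_Diff_in_shadow:
  assumes "U \<inter> V = {}" "u \<in> U" "x \<in> V" "compressed (U - {u}) (V - {x}) F"
    and "E \<in> F" "U \<subseteq> E" "E \<inter> V \<subseteq> {x}"
  shows "(E - U) \<union> (V - {x}) \<in> shadow F"
proof (rule shadowI)
  show "shift (U - {u}) (V - {x}) E \<in> F"
    using assms unfolding compressed_def shiftable_def by blast
  show "u \<in> shift (U - {u}) (V - {x}) E"
    using assms unfolding shift_def by blast
  show "(E - U) \<union> (V - {x}) = shift (U - {u}) (V - {x}) E - {u}"
    using assms unfolding shift_def by blast
qed

lemma Diff_singleton_in_compress_shadow_shiftable:
  assumes UV: "U \<inter> V = {}" "U \<noteq> {}"
    and smaller: "x \<in> V \<Longrightarrow> \<exists>u\<in>U. compressed (U - {u}) (V - {x}) F"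
    and A: "A \<in> compress U V F" "x \<in> A" and B: "shiftable U V (A - {x})"
  shows "A - {x} \<in> compress U V (shadow F)"
proof -
  have "A - {x} \<in> shadow F \<and> shift U V (A - {x}) \<in> shadow F"
  proof (cases "x \<in> V")
    case True
    then obtain u where u: "u \<in> U" "compressed (U - {u}) (V - {x}) F"
      using smaller by blast
    have "\<not> shiftable U V A" "\<not> (V \<subseteq> A \<and> U \<inter> A = {})"
      using A B True UV unfolding shiftable_def by blast+
    then have "A \<in> F"
      using A(1) mem_compress_fixed by blast
    moreover have "U \<subseteq> A" "A \<inter> V \<subseteq> {x}"
      using B unfolding shiftable_def by blast+
    ultimately have "(A - U) \<union> (V - {x}) \<in> shadow F"
      using shift_Diff_in_shadow[OF UV(1) u(1) True u(2)] by blast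
    moreover have "shift U V (A - {x}) = (A - U) \<union> (V - {x})"
      using A B True unfolding shiftable_def shift_def by blast
    ultimately show ?thesis
      using \<open>A \<in> F\<close> A(2) shadowI by simp
  next
    case False
    then have "shiftable U V A"
      using B unfolding shiftable_def by blast
    then have "A \<in> F" "shift U V A \<in> F"
      using A(1) mem_compress_shiftable[OF UV] by blast+
    moreover have "x \<in> shift U V A" "shift U V (A - {x}) = shift U V A - {x}"
      using A B False unfolding shiftable_def shift_def by blast+
    ultimately show ?thesis
      using A(2) shadowI by blast
  qed
  then show ?thesis
    by (rule iffD2[OF mem_compress_shiftable[OF UV B]])
qed

lemma Diff_singleton_in_compress_shadow_shifted:
  assumes UV: "U \<inter> V = {}" "U \<noteq> {}" "V \<noteq> {}"
    and A: "A \<in> compress U V F" "x \<in> A" and B: "V \<subseteq> A - {x}" "U \<inter> (A - {x}) = {}"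
  shows "A - {x} \<in> compress U V (shadow F)"
proof -
  have "A - {x} \<in> shadow F \<or> (A - {x} - V) \<union> U \<in> shadow F"
  proof (cases "x \<in> U")
    case True
    then have "\<not> shiftable U V A" "\<not> (V \<subseteq> A \<and> U \<inter> A = {})"
      using A B UV unfolding shiftable_def by blast+
    then have "A \<in> F"
      using A(1) mem_compress_fixed by blast
    then show ?thesis
      using A(2) shadowI by blast
  next
    case False
    then have "V \<subseteq> A" "U \<inter> A = {}"
      using B by blast+
    then have "A \<in> F \<or> (A - V) \<union> U \<in> F"
      using A(1) mem_compress_shifted[OF UV(1,3)] by blast
    moreover have "x \<in> (A - V) \<union> U" "(A - {x} - V) \<union> U = ((A - V) \<union> U) - {x}"
      using A B False by blast+
    ultimately show ?thesis
      using A(2) shadowI by blast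
  qed
  then show ?thesis
    by (rule iffD2[OF mem_compress_shifted[OF UV(1,3) B]])
qed

lemma Diff_singleton_in_compress_shadow_fixed:
  assumes UV: "U \<inter> V = {}" "U \<noteq> {}" "V \<noteq> {}"
    and smaller: "x \<in> V \<Longrightarrow> \<exists>u\<in>U. compressed (U - {u}) (V - {x}) F"
    and A: "A \<in> compress U V F" "x \<in> A"
    and B: "\<not> shiftable U V (A - {x})" "\<not> (V \<subseteq> A - {x} \<and> U \<inter> (A - {x}) = {})"
  shows "A - {x} \<in> compress U V (shadow F)"
proof -
  have "A - {x} \<in> shadow F"
  proof (cases "A \<in> F")
    case False
    have shifted: "V \<subseteq> A \<and> U \<inter> A = {}"
      using A(1) False mem_compress_shiftable[OF UV(1,2)] mem_compress_fixed by blast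
    then have D: "(A - V) \<union> U \<in> F"
      using A(1) False mem_compress_shifted[OF UV(1,3)] by blast
    have "x \<in> V"
      using B shifted by blast
    then obtain u where u: "u \<in> U" "compressed (U - {u}) (V - {x}) F"
      using smaller by blast
    have "(((A - V) \<union> U) - U) \<union> (V - {x}) \<in> shadow F"
      using shift_Diff_in_shadow[OF UV(1) u(1) \<open>x \<in> V\<close> u(2) D] shifted UV(1) by blast
    moreover have "A - {x} = (((A - V) \<union> U) - U) \<union> (V - {x})"
      using shifted UV \<open>x \<in> V\<close> by blast
    ultimately show ?thesis
      by simp
  qed (use A(2) shadowI in blast)
  then show ?thesis
    by (rule iffD2[OF mem_compress_fixed[OF B]])
qed

lemma shadow_compress_subset:
  assumes "U \<inter> V = {}" "U \<noteq> {}" "V \<noteq> {}"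
    and "\<And>x. x \<in> V \<Longrightarrow> \<exists>u\<in>U. compressed (U - {u}) (V - {x}) F"
  shows "shadow (compress U V F) \<subseteq> compress U V (shadow F)"
proof
  fix B assume "B \<in> shadow (compress U V F)"
  then obtain A x where A: "A \<in> compress U V F" "x \<in> A" "B = A - {x}"
    unfolding shadow_def by blast
  then show "B \<in> compress U V (shadow F)"
    using Diff_singleton_in_compress_shadow_shiftable[OF assms(1,2,4) A(1,2)]
      Diff_singleton_in_compress_shadow_shifted[OF assms(1-3) A(1,2)]
      Diff_singleton_in_compress_shadow_fixed[OF assms A(1,2)] by blast
qed

lemma shift_pair_Diff_singletons:
  assumes Y: "finite Y" and UV: "shift_pair Y U V"
    and u: "u \<in> U" "u \<noteq> Min U" and x: "x \<in> V"
  shows "shift_pair Y (U - {u}) (V - {x})"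
proof -
  have fin: "finite U" "finite V"
    using shift_pair_finite[OF Y UV] .
  have U: "U \<noteq> {}" "card U = card V" "Min U < Min V"
    using UV by (simp_all add: shift_pair_def)
  then have "Min U \<in> U - {u}"
    using fin u by simp
  have card_eq: "card (U - {u}) = card (V - {x})"
    using u x U(2) by simp
  then have "V - {x} \<noteq> {}"
    using fin \<open>Min U \<in> U - {u}\<close> by (metis card_0_eq empty_iff finite_Diff)
  then have "Min (V - {x}) \<in> V"
    using fin by (metis Diff_subset Min_in finite_Diff subsetD)
  then have "Min V \<le> Min (V - {x})"
    using fin by (intro Min_le)
  moreover have "Min (U - {u}) \<le> Min U"
    using fin \<open>Min U \<in> U - {u}\<close> by (intro Min_le) auto
  ultimately show ?thesis
    using UV card_eq \<open>Min U \<in> U - {u}\<close> U(3) unfolding shift_pair_def by auto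
qed

lemma compressed_Diff_singletons:
  assumes Y: "finite Y" and UV: "shift_pair Y U V" "x \<in> V"
    and smaller: "\<And>U' V'. shift_pair Y U' V' \<Longrightarrow> card U' < card U \<Longrightarrow> compressed U' V' F"
  shows "\<exists>u\<in>U. compressed (U - {u}) (V - {x}) F"
proof (cases "card U = 1")
  case True
  then obtain u where "U = {u}" "V = {x}"
    using UV by (metis card_1_singletonE shift_pair_def singletonD)
  then show ?thesis
    by (simp add: compressed_def shiftable_def shift_def)
next
  case False
  have "finite U" "U \<noteq> {}"
    using shift_pair_finite[OF Y UV(1)] UV(1) by (auto simp: shift_pair_def)
  then obtain u where u: "u \<in> U" "u \<noteq> Min U"
    using False by (metis Min_in card_1_singletonE insertCI is_singletonI' is_singleton_altdef)
  then have "compressed (U - {u}) (V - {x}) F"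
    using smaller shift_pair_Diff_singletons[OF Y UV(1) u UV(2)] card_Diff1_less[OF \<open>finite U\<close> u(1)]
    by blast
  then show ?thesis
    using u(1) by blast
qed

lemma lex_final_if_compressed:
  assumes "finite Y" "F \<subseteq> ksets Y s" "\<And>U V. shift_pair Y U V \<Longrightarrow> compressed U V F"
  shows "lex_final Y s F"
  unfolding lex_final_def
proof (intro conjI ballI impI)
  fix A B assume A: "A \<in> F" and B: "B \<in> ksets Y s" and prec: "lex_prec A B"
  have fA: "finite A" "card A = s" "A \<subseteq> Y" and fB: "finite B" "card B = s" "B \<subseteq> Y"
    using A assms(1,2) B ksetsD by blast+
  have "A - B \<noteq> {}" "B - A \<noteq> {}"
    using prec fA fB lex_prec_irrefl card_subset_eq[of A B] by (auto simp: lex_prec_def)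
  then have "Min (A - B) < Min (B - A)"
    using prec fA fB lex_prec_iff_Min by blast
  moreover have "card (A - B) = card (B - A)"
    using fA fB by (metis card_Diff_subset_Int inf_commute finite_Int)
  ultimately have "shift_pair Y (A - B) (B - A)"
    using fA fB \<open>A - B \<noteq> {}\<close> unfolding shift_pair_def by auto
  moreover have "shiftable (A - B) (B - A) A" "shift (A - B) (B - A) A = B"
    unfolding shiftable_def shift_def by auto
  ultimately show "B \<in> F"
    using assms(3) A unfolding compressed_def by metis
qed (use assms in simp)

lemma card_shadow_compress_le:
  assumes Y: "finite Y" and UV: "shift_pair Y U V" and F: "F \<subseteq> ksets Y s"
    and smaller: "\<And>U' V'. shift_pair Y U' V' \<Longrightarrow> card U' < card U \<Longrightarrow> compressed U' V' F"
  shows "card (shadow (compress U V F)) \<le> card (shadow F)"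
proof -
  have disj: "U \<inter> V = {}" "U \<noteq> {}" "V \<noteq> {}"
    using UV shift_pair_finite[OF Y UV] by (auto simp: shift_pair_def)
  have fin: "finite (shadow F)"
    using finite_shadow[OF Y F] .
  have "card (shadow (compress U V F)) \<le> card (compress U V (shadow F))"
    using shadow_compress_subset[OF disj compressed_Diff_singletons[OF Y UV _ smaller]]
      finite_compress[OF fin] by (intro card_mono)
  also have "\<dots> = card (shadow F)"
    using card_compress[OF fin disj(1)] .
  finally show ?thesis .
qed

lemma ex_least_uncompressed_pair:
  assumes "shift_pair Y U0 V0" "\<not> compressed U0 V0 F"
  obtains U V where "shift_pair Y U V" "\<not> compressed U V F"
    "\<And>U' V'. shift_pair Y U' V' \<Longrightarrow> card U' < card U \<Longrightarrow> compressed U' V' F"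
proof -
  let ?bad = "\<lambda>p. shift_pair Y (fst p) (snd p) \<and> \<not> compressed (fst p) (snd p) F"
  have "\<exists>p. ?bad p \<and> (\<forall>q. ?bad q \<longrightarrow> card (fst p) \<le> card (fst q))"
    by (rule ex_has_least_nat[of ?bad "(U0, V0)" "\<lambda>p. card (fst p)"]) (simp add: assms)
  then obtain p where p: "?bad p" and least: "\<And>q. ?bad q \<Longrightarrow> card (fst p) \<le> card (fst q)"
    by blast
  show ?thesis
  proof (rule that[of "fst p" "snd p"])
    show "compressed U' V' F" if "shift_pair Y U' V'" "card U' < card (fst p)" for U' V'
      using that least[of "(U', V')"] by force
  qed (use p in auto)
qed

(* Compress along a non-compressed pair (U,V) with |U| minimal: this keeps the size, does not
   enlarge the shadow and strictly decreases lex_weight. *)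
lemma ex_lex_final_card_shadow_le:
  assumes Y: "finite Y"
  shows "F \<subseteq> ksets Y s \<Longrightarrow>
    \<exists>F'. lex_final Y s F' \<and> card F' = card F \<and> card (shadow F') \<le> card (shadow F)"
proof (induction "lex_weight Y s F" arbitrary: F rule: less_induct)
  case less
  show ?case
  proof (cases "\<forall>U V. shift_pair Y U V \<longrightarrow> compressed U V F")
    case True
    then show ?thesis
      using lex_final_if_compressed[OF Y less.prems] by blast
  next
    case False
    then obtain U V where UV: "shift_pair Y U V" "\<not> compressed U V F"
      and least: "\<And>U' V'. shift_pair Y U' V' \<Longrightarrow> card U' < card U \<Longrightarrow> compressed U' V' F"
      using ex_least_uncompressed_pair by blast
    obtain F' where F': "lex_final Y s F'" "card F' = card (compress U V F)"
      "card (shadow F') \<le> card (shadow (compress U V F))"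
      using less.hyps[OF lex_weight_compress_less[OF Y UV(1) less.prems UV(2)]]
        compress_subset_ksets[OF Y UV(1) less.prems] by blast
    moreover have "card (compress U V F) = card F"
      using card_compress finite_subset[OF less.prems finite_ksets[OF Y]] UV(1)
      by (simp add: shift_pair_def)
    ultimately show ?thesis
      using card_shadow_compress_le[OF Y UV(1) less.prems least] by (metis le_trans)
  qed
qed

lemma card_shadow_lex_final_le:
  assumes "finite Y" "lex_final Y s Q" "D \<subseteq> ksets Y s" "card Q \<le> card D"
  shows "card (shadow Q) \<le> card (shadow D)"
proof -
  obtain F where F: "lex_final Y s F" "card F = card D" "card (shadow F) \<le> card (shadow D)"
    using ex_lex_final_card_shadow_le[OF assms(1,3)] by blast
  have "Q \<subseteq> F"
    using lex_final_subset[OF assms(1,2) F(1)] assms(4) F(2) by simp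
  then have "shadow Q \<subseteq> shadow F"
    unfolding shadow_def by blast
  then have "card (shadow Q) \<le> card (shadow F)"
    using finite_shadow[OF assms(1)] F(1) unfolding lex_final_def by (blast intro: card_mono)
  with F(3) show ?thesis
    by linarith
qed

lemma ex_lex_later_extension:
  assumes Y: "finite Y" and R: "R \<in> ksets Y s" "x \<in> R"
    and B: "B \<in> ksets Y (s - 1)" "lex_prec (R - {x}) B"
  obtains y where "y \<in> Y - B" "R = insert y B \<or> lex_prec R (insert y B)"
proof -
  have fR: "finite R" "card R = s" "R \<subseteq> Y" and fB: "finite B" "card B = s - 1" "B \<subseteq> Y"
    using ksetsD R(1) B(1) Y by blast+
  obtain j where j: "j \<in> R" "j \<noteq> x" "j \<notin> B" "\<forall>i<j. i \<in> R - {x} \<longleftrightarrow> i \<in> B"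
    using B(2) unfolding lex_prec_def by blast
  show ?thesis
  proof (cases "x \<in> B")
    case False
    have "R = insert x (R - {x})"
      using R(2) by blast
    then have "lex_prec R (insert x B)"
      using B(2) False lex_prec_insert[of x "R - {x}" B] by simp
    then show ?thesis
      using that R(2) fR(3) False by blast
  next
    case True
    have "j < x"
      using j True by (metis DiffE insertI1 linorder_neqE_nat)
    show ?thesis
    proof (cases "\<exists>y\<in>Y - B. j < y")
      case True
      then obtain y where y: "y \<in> Y - B" "j < y"
        by blast
      have "lex_prec R (insert y B)"
        unfolding lex_prec_def using j y \<open>j < x\<close> by (intro exI[of _ j]) auto
      then show ?thesis
        using that y(1) by blast
    next
      case False
      have "R \<subseteq> insert j B"
      proof
        fix i assume "i \<in> R"
        then show "i \<in> insert j B"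
          using j False \<open>x \<in> B\<close> fR(3) by (cases i j rule: linorder_cases) auto
      qed
      moreover have "card (insert j B) = card R"
        using fB fR j(3) R(2) by (metis card_insert_disjoint card_gt_0_iff empty_iff Suc_diff_1)
      ultimately have "R = insert j B"
        using fB by (intro card_subset_eq) auto
      then show ?thesis
        using that j fR(3) by blast
    qed
  qed
qed

lemma shadow_lex_final:
  assumes Y: "finite Y" and Q: "lex_final Y s Q"
  shows "lex_final Y (s - 1) (shadow Q)"
  unfolding lex_final_def
proof (intro conjI ballI impI)
  show "shadow Q \<subseteq> ksets Y (s - 1)"
    using shadow_subset_ksets[OF Y] Q unfolding lex_final_def by blast
next
  fix B B' assume "B \<in> shadow Q" and B': "B' \<in> ksets Y (s - 1)" "lex_prec B B'"
  then obtain R x where R: "R \<in> Q" "x \<in> R" "B = R - {x}"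
    unfolding shadow_def by blast
  have Rk: "R \<in> ksets Y s"
    using R(1) Q unfolding lex_final_def by blast
  obtain y where y: "y \<in> Y - B'" "R = insert y B' \<or> lex_prec R (insert y B')"
    using B'(2) unfolding R(3) by (rule ex_lex_later_extension[OF Y Rk R(2) B'(1)])
  have "s \<ge> 1"
    using ksetsD[OF Rk Y] R(2) by (cases s) auto
  then have "insert y B' \<in> ksets Y s"
    using insert_in_ksets[OF B'(1) Y y(1)] by simp
  then have "insert y B' \<in> Q"
    using y(2) R(1) Q unfolding lex_final_def by blast
  then show "B' \<in> shadow Q"
    using y(1) by (intro shadowI[of "insert y B'" Q y]) auto
qed

definition shadow_level :: "nat set \<Rightarrow> nat \<Rightarrow> nat set set \<Rightarrow> nat set set" where
  "shadow_level Y t F = {R \<in> ksets Y t. \<exists>A\<in>F. R \<subseteq> A}"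

lemma shadow_level_self:
  assumes "finite Y" "F \<subseteq> ksets Y s"
  shows "shadow_level Y s F = F"
proof
  show "F \<subseteq> shadow_level Y s F"
    using assms(2) unfolding shadow_level_def by blast
  show "shadow_level Y s F \<subseteq> F"
  proof
    fix R assume "R \<in> shadow_level Y s F"
    then obtain A where "R \<in> ksets Y s" "A \<in> F" "R \<subseteq> A"
      unfolding shadow_level_def by blast
    moreover have "A \<in> ksets Y s"
      using \<open>A \<in> F\<close> assms(2) by blast
    ultimately show "R \<in> F"
      using card_subset_eq ksetsD assms(1) by metis
  qed
qed

lemma shadow_level_Suc:
  assumes Y: "finite Y" and F: "F \<subseteq> ksets Y s" and "t < s"
  shows "shadow_level Y t F = shadow (shadow_level Y (Suc t) F)"
proof
  show "shadow_level Y t F \<subseteq> shadow (shadow_level Y (Suc t) F)"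
  proof
    fix R assume "R \<in> shadow_level Y t F"
    then obtain A where R: "R \<in> ksets Y t" "A \<in> F" "R \<subseteq> A"
      unfolding shadow_level_def by blast
    have "card R < card A"
      using ksetsD[OF R(1) Y] ksetsD[of A Y s] R(2) F Y \<open>t < s\<close> by auto
    have "\<not> A \<subseteq> R"
      using card_mono[OF ksetsD(1)[OF R(1) Y]] \<open>card R < card A\<close> by (meson leD)
    then obtain y where y: "y \<in> A - R"
      by blast
    then have "insert y R \<in> shadow_level Y (Suc t) F"
      using insert_in_ksets[OF R(1) Y, of y Y] R F ksetsD(3)[of A Y s] Y
      unfolding shadow_level_def by blast
    then show "R \<in> shadow (shadow_level Y (Suc t) F)"
      using y R(3) by (intro shadowI[of "insert y R" _ y]) auto
  qed
  show "shadow (shadow_level Y (Suc t) F) \<subseteq> shadow_level Y t F"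
    using shadow_subset_ksets[OF Y, of "shadow_level Y (Suc t) F" "Suc t"]
    unfolding shadow_def shadow_level_def by auto
qed

lemma shadow_level_lex_final_le:
  assumes Y: "finite Y" and Q: "lex_final Y s Q" and D: "D \<subseteq> ksets Y s"
    and card: "card Q \<le> card D" and "t \<le> s"
  shows "lex_final Y t (shadow_level Y t Q) \<and> card (shadow_level Y t Q) \<le> card (shadow_level Y t D)"
  using \<open>t \<le> s\<close>
proof (induction t rule: inc_induct)
  case base
  have "Q \<subseteq> ksets Y s"
    using Q unfolding lex_final_def by blast
  then show ?case
    using shadow_level_self[OF Y] D Q card by simp
next
  case (step t)
  have "Q \<subseteq> ksets Y s"
    using Q unfolding lex_final_def by blast
  then have "shadow_level Y t Q = shadow (shadow_level Y (Suc t) Q)"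
    "shadow_level Y t D = shadow (shadow_level Y (Suc t) D)"
    using shadow_level_Suc[OF Y _ step.hyps(2)] D by blast+
  moreover have "shadow_level Y (Suc t) D \<subseteq> ksets Y (Suc t)"
    unfolding shadow_level_def by blast
  ultimately show ?case
    using shadow_lex_final[OF Y, of "Suc t"] card_shadow_lex_final_le[OF Y, of "Suc t"] step.IH
    by simp
qed

lemma card_ksets_less_lex_final_lex_initial:
  assumes "finite X" "lex_final X k W" "lex_initial X k L" "S \<in> W" "S \<in> L"
  shows "card (ksets X k) < card W + card L"
proof -
  have fin: "finite W" "finite L"
    using assms finite_ksets finite_subset unfolding lex_final_def lex_initial_def by metis+
  have "card (ksets X k) \<le> card (W \<union> L)"
    using lex_final_Un_lex_initial[OF assms(2-5)] fin by (intro card_mono) auto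
  moreover have "card (W \<inter> L) > 0"
    using assms(4,5) fin by (auto simp: card_gt_0_iff)
  ultimately show ?thesis
    using card_Un_Int[OF fin] by linarith
qed

lemma card_Diff_image:
  assumes "A \<subseteq> ksets Y k"
  shows "card ((-) Y ` A) = card A"
proof (rule card_image, rule inj_onI)
  fix X X' assume "X \<in> A" "X' \<in> A" "Y - X = Y - X'"
  moreover have "X \<subseteq> Y" "X' \<subseteq> Y"
    using \<open>X \<in> A\<close> \<open>X' \<in> A\<close> assms unfolding ksets_def by auto
  ultimately show "X = X'"
    by blast
qed

lemma cross_intersecting_Lex:
  assumes Y: "finite Y" and A: "A \<subseteq> ksets Y k" and B: "B \<subseteq> ksets Y l"
    and cross: "cross_intersecting A B" and kl: "k + l \<le> card Y"
  shows "cross_intersecting (Lex Y k (card A)) (Lex Y l (card B))"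
  unfolding cross_intersecting_def
proof (intro ballI notI)
  fix T S assume T: "T \<in> Lex Y k (card A)" and S: "S \<in> Lex Y l (card B)" and "T \<inter> S = {}"
  define W where "W = shadow_level Y l ((-) Y ` Lex Y k (card A))"
  define A' where "A' = shadow_level Y l ((-) Y ` A)"
  have "card ((-) Y ` Lex Y k (card A)) \<le> card ((-) Y ` A)"
    using card_image_le[of "Lex Y k (card A)" "(-) Y"] card_Lex_le[OF Y, of k "card A"]
      finite_subset[OF Lex_subset_ksets finite_ksets] Y card_Diff_image[OF A] by fastforce
  moreover have "(-) Y ` A \<subseteq> ksets Y (card Y - k)"
    using A Diff_in_ksets[OF _ Y] by blast
  ultimately have W: "lex_final Y l W" "card W \<le> card A'"
    using shadow_level_lex_final_le[OF Y lex_final_Diff_image[OF Y lex_initial_Lex[OF Y]]] kl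
    unfolding W_def A'_def by simp_all
  have "A' \<inter> B = {}"
    using cross unfolding A'_def shadow_level_def cross_intersecting_def by blast
  have "A' \<subseteq> ksets Y l"
    unfolding A'_def shadow_level_def by blast
  then have "finite A'" "finite B"
    using B finite_ksets[OF Y] finite_subset by blast+
  then have "card A' + card B = card (A' \<union> B)"
    using \<open>A' \<inter> B = {}\<close> by (simp add: card_Un_disjoint)
  also have "\<dots> \<le> card (ksets Y l)"
    using B \<open>A' \<subseteq> ksets Y l\<close> finite_ksets[OF Y] by (intro card_mono) auto
  finally have "card A' + card B \<le> card (ksets Y l)" .
  moreover have "S \<in> ksets Y l"
    using S Lex_subset_ksets[OF Y] by blast
  then have "S \<subseteq> Y - T"
    using \<open>T \<inter> S = {}\<close> unfolding ksets_def by blast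
  then have "S \<in> W"
    using T \<open>S \<in> ksets Y l\<close> unfolding W_def shadow_level_def by blast
  then have "card (ksets Y l) < card W + card (Lex Y l (card B))"
    using card_ksets_less_lex_final_lex_initial[OF Y W(1) lex_initial_Lex[OF Y] _ S] by blast
  ultimately show False
    using W(2) card_Lex_le[OF Y, of l "card B"] by linarith
qed

lemma atLeastAtMost_Diff_min: "{1..n} - {1} = {2..n::nat}"
  by auto

lemma Lex_subset_supersets:
  assumes "finite X" "\<And>p y. p \<in> P \<Longrightarrow> y \<in> X - P \<Longrightarrow> p < y"
    and "b \<le> card {E \<in> ksets X k. P \<subseteq> E}"
  shows "Lex X k b \<subseteq> {E \<in> ksets X k. P \<subseteq> E}"
  using Lex_subset_lex_initial[OF assms(1) lex_initial_supersets] assms by blast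

lemma supersets_subset_Lex:
  assumes "finite X" "\<And>p y. p \<in> P \<Longrightarrow> y \<in> X - P \<Longrightarrow> p < y"
    and "card {E \<in> ksets X k. P \<subseteq> E} \<le> b"
  shows "{E \<in> ksets X k. P \<subseteq> E} \<subseteq> Lex X k b"
  using lex_initial_subset_Lex[OF assms(1) lex_initial_supersets] assms by blast

lemma cross_intersecting_Lex_without1_with1:
  assumes "2 * k \<le> n" "F \<subseteq> ksets {1..n} k" "G \<subseteq> ksets {1..n} k" "cross_intersecting F G"
  shows "cross_intersecting (Lex {2..n} k (card (without1 F))) (Lex {2..n} (k - 1) (card (with1 G)))"
proof -
  note Y = atLeastAtMost_Diff_min[of n]
  define B where "B = (\<lambda>E. E - {1}) ` with1 G"
  have "without1 F \<subseteq> ksets {2..n} k"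
    using assms(2) unfolding without1_def ksets_def Y[symmetric] by blast
  moreover have "B \<subseteq> ksets {2..n} (k - 1)"
    using assms(3) Diff_singleton_in_ksets[of _ "{1..n}" k 1] unfolding B_def with1_def Y by auto
  moreover have "cross_intersecting (without1 F) B"
    using assms(4) unfolding cross_intersecting_def without1_def B_def with1_def by blast
  moreover have "card B = card (with1 G)"
    unfolding B_def with1_def
    by (rule card_image, rule inj_onI) (metis (no_types, lifting) insert_Diff mem_Collect_eq)
  moreover have "k + (k - 1) \<le> card {2..n}"
    using assms(1) by simp
  ultimately show ?thesis
    using cross_intersecting_Lex[of "{2..n}" "without1 F" k B "k - 1"] by simp
qed

lemma H0_contains_2:
  assumes "2 * k < n" "2 \<le> k" "F \<subseteq> ksets {1..n} k" "G \<subseteq> ksets {1..n} k" "cross_intersecting F G"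
    and "(n - 2) choose (k - 2) \<le> card (with1 G)"
    and "T \<in> H0 n k F"
  shows "2 \<in> T"
proof (rule ccontr)
  have T: "T \<in> Lex {2..n} k (card (without1 F))"
    using assms(7) unfolding H0_def .
  assume "2 \<notin> T"
  let ?star = "{E \<in> ksets {2..n} (k - 1). {2} \<subseteq> E}"
  have "card ?star = (n - 2) choose (k - 2)"
    using card_ksets_superset[of "{2..n}" "{2}" "k - 1"] assms(1,2) by (simp add: numeral_2_eq_2)
  then have star: "?star \<subseteq> Lex {2..n} (k - 1) (card (with1 G))"
    using supersets_subset_Lex[of "{2..n}" "{2}"] assms(6) by auto
  have "T \<subseteq> {2..n}" "card T = k"
    using ksetsD Lex_subset_ksets T by blast+
  then have "card ({2..n} - T) = n - 1 - k" "2 \<in> {2..n} - T"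
    using \<open>2 \<notin> T\<close> assms(1,2) by (auto simp: card_Diff_subset finite_subset)
  moreover have "card {2::nat} \<le> k - 1" "k - 1 \<le> n - 1 - k"
    using assms(1,2) by auto
  ultimately obtain S where "S \<in> ksets ({2..n} - T) (k - 1)" "{2} \<subseteq> S"
    using ex_ksets_superset[of "{2..n} - T" "{2}" "k - 1"] by auto
  then have "S \<in> ?star" "T \<inter> S = {}"
    using ksets_mono[of "{2..n} - T" "{2..n}"] unfolding ksets_def by auto
  then show False
    using cross_intersecting_Lex_without1_with1[OF _ assms(3-5)] assms(1) T star
    unfolding cross_intersecting_def by (meson less_imp_le subsetD)
qed

lemma H1_contains_1:
  assumes "G \<subseteq> ksets {1..n} k" "R \<in> H1 n k G"
  shows "1 \<in> R"
proof -
  have "with1 G \<subseteq> {E \<in> ksets {1..n} k. {1} \<subseteq> E}"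
    using assms(1) unfolding with1_def by blast
  then have "card (with1 G) \<le> card {E \<in> ksets {1..n} k. {1} \<subseteq> E}"
    by (intro card_mono) (simp_all add: finite_ksets)
  then have "H1 n k G \<subseteq> {E \<in> ksets {1..n} k. {1} \<subseteq> E}"
    unfolding H1_def by (intro Lex_subset_supersets) auto
  then show ?thesis
    using assms(2) by blast
qed

lemma intersecting_H0_H1:
  assumes "2 * k < n" "2 \<le> k" "F \<subseteq> ksets {1..n} k" "G \<subseteq> ksets {1..n} k" "cross_intersecting F G"
    and "(n - 2) choose (k - 2) \<le> card (with1 G)"
  shows "intersecting (H0 n k F \<union> H1 n k G)"
proof -
  have H1: "1 \<in> R" "R - {1} \<in> Lex {2..n} (k - 1) (card (with1 G))" if "R \<in> H1 n k G" for R
    using H1_contains_1[OF assms(4) that] that Lex_Diff_singleton[of "{1..n}" R k "card (with1 G)" 1]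
    unfolding atLeastAtMost_Diff_min H1_def by blast+
  have H0: "2 \<in> T" if "T \<in> H0 n k F" for T
    using H0_contains_2[OF assms that] .
  have "T \<inter> R \<noteq> {}" if "T \<in> H0 n k F" "R \<in> H1 n k G" for T R
    using cross_intersecting_Lex_without1_with1[OF _ assms(3-5)] assms(1) that H1(2)
    unfolding cross_intersecting_def H0_def by fastforce
  then show ?thesis
    unfolding intersecting_def using H0 H1(1) by blast
qed

lemma H0_nonempty:
  assumes "k < n" "F \<subseteq> ksets {1..n} k" "nontrivial F"
  shows "H0 n k F \<noteq> {}"
proof -
  have "without1 F \<noteq> {}"
    using assms(3) unfolding nontrivial_def without1_def by blast
  then have "card {} < card (without1 F)"
    using finite_subset[OF assms(2) finite_ksets] by (auto simp: without1_def card_gt_0_iff)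
  moreover have "k \<le> card {2..n}"
    using assms(1) by simp
  then obtain T0 where "T0 \<in> ksets {2..n} k"
    using ex_ksets_superset[of "{2..n}" "{}" k] by auto
  then have "{} \<subset> ksets {2..n} k"
    by blast
  ultimately show ?thesis
    unfolding H0_def by (metis empty_iff ex_Lex_notin finite_atLeastAtMost)
qed

lemma card_supersets_1_2:
  assumes "2 \<le> k" "k \<le> n"
  shows "card {E \<in> ksets {1..n} k. {1, 2} \<subseteq> E} = (n - 2) choose (k - 2)"
  using card_ksets_superset[of "{1..n}" "{1, 2}" k] assms by (simp add: numeral_2_eq_2)

lemma supersets_1_2_subset_H1:
  assumes "2 \<le> k" "k \<le> n" "(n - 2) choose (k - 2) \<le> card (with1 G)"
  shows "{E \<in> ksets {1..n} k. {1, 2} \<subseteq> E} \<subseteq> H1 n k G"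
  unfolding H1_def by (rule supersets_subset_Lex) (use card_supersets_1_2 assms in auto)

lemma ex_H1_without_2:
  assumes "2 * k < n" "2 \<le> k" "G \<subseteq> ksets {1..n} k" "(n - 2) choose (k - 2) < card (with1 G)"
  obtains R where "R \<in> H1 n k G" "1 \<in> R" "2 \<notin> R"
proof -
  let ?C = "{E \<in> ksets {1..n} k. {1, 2} \<subseteq> E}"
  have "k \<le> card ({1..n} - {2})"
    using assms(1,2) by simp
  then obtain R0 where "R0 \<in> ksets ({1..n} - {2}) k"
    using ex_ksets_superset[of "{1..n} - {2}" "{}" k] by auto
  then have "R0 \<in> ksets {1..n} k - ?C"
    unfolding ksets_def by blast
  then have "?C \<subset> ksets {1..n} k"
    by blast
  moreover have "card ?C < card (with1 G)"
    using card_supersets_1_2 assms by simp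
  ultimately obtain R where R: "R \<in> H1 n k G" "R \<notin> ?C"
    unfolding H1_def by (rule ex_Lex_notin[OF finite_atLeastAtMost])
  moreover have "R \<in> ksets {1..n} k" "1 \<in> R"
    using R(1) Lex_subset_ksets H1_contains_1[OF assms(3)] unfolding H1_def by blast+
  ultimately show ?thesis
    using that by blast
qed

lemma nontrivial_H0_H1:
  assumes "2 * k < n" "2 \<le> k" "F \<subseteq> ksets {1..n} k" "G \<subseteq> ksets {1..n} k" "nontrivial F"
    and "(n - 2) choose (k - 2) < card (with1 G)"
  shows "nontrivial (H0 n k F \<union> H1 n k G)"
proof -
  obtain T where T: "T \<in> H0 n k F"
    using H0_nonempty assms(1,3,5) by fastforce
  obtain R where R: "R \<in> H1 n k G" "1 \<in> R" "2 \<notin> R"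
    using ex_H1_without_2 assms(1,2,4,6) by blast
  have "R \<in> ksets {1..n} k"
    using R(1) Lex_subset_ksets unfolding H1_def by blast
  then have "R \<subseteq> {1..n}" "card R = k"
    unfolding ksets_def by auto
  then have "card (({1..n} - R) \<union> {1}) = Suc (n - k)" "{1, 2} \<subseteq> ({1..n} - R) \<union> {1}"
    using R(2,3) assms(1,2) by (auto simp: card_Diff_subset finite_subset)
  moreover have "card {1, 2::nat} \<le> k" "k \<le> Suc (n - k)"
    using assms(1,2) by simp_all
  ultimately obtain R' where R': "R' \<in> ksets (({1..n} - R) \<union> {1}) k" "{1, 2} \<subseteq> R'"
    using ex_ksets_superset[of "({1..n} - R) \<union> {1}" "{1, 2}" k] by auto
  then have "R' \<in> {E \<in> ksets {1..n} k. {1, 2} \<subseteq> E}"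
    using assms(1) unfolding ksets_def by auto
  then have "R' \<in> H1 n k G"
    using supersets_1_2_subset_H1[of k n G] assms(1,2,6) by auto
  moreover have "1 \<notin> T"
    using T Lex_subset_ksets unfolding H0_def ksets_def by fastforce
  moreover have "R \<inter> R' \<subseteq> {1}"
    using R' unfolding ksets_def by blast
  ultimately show ?thesis
    using T R(1) unfolding nontrivial_def by blast
qed

theorem lemma2p3:
  fixes n k :: nat and F G :: "nat set set"
  assumes "n > 2 * k" and "2 * k \<ge> 4"
    and "F \<subseteq> ksets {1..n} k" and "G \<subseteq> ksets {1..n} k"
    and "nontrivial F" and "nontrivial G"
    and "cross_intersecting F G"
    and "card (with1 F) \<ge> (n - 2) choose (k - 2)"
    and "card (with1 G) \<ge> (n - 2) choose (k - 2)"
  shows "(intersecting (H0 n k F \<union> H1 n k G) \<and> intersecting (H1 n k F \<union> H0 n k G))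
     \<and> (min (card (with1 F)) (card (with1 G)) > (n - 2) choose (k - 2) \<longrightarrow>
           nontrivial (H0 n k F \<union> H1 n k G) \<and> nontrivial (H1 n k F \<union> H0 n k G))"
proof -
  have k: "2 \<le> k"
    using assms(2) by simp
  have "cross_intersecting G F"
    using assms(7) unfolding cross_intersecting_def by blast
  then have "intersecting (H0 n k F \<union> H1 n k G)" "intersecting (H0 n k G \<union> H1 n k F)"
    using intersecting_H0_H1[OF assms(1) k] assms by blast+
  moreover have "nontrivial (H0 n k F \<union> H1 n k G) \<and> nontrivial (H0 n k G \<union> H1 n k F)"
    if "min (card (with1 F)) (card (with1 G)) > (n - 2) choose (k - 2)"
    using that nontrivial_H0_H1[OF assms(1) k] assms by simp
  ultimately show ?thesis
    by (simp add: Un_commute)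
qed

end
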